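(* Let $\Lambda$ be a well-rounded lattice of rank $9$ in a $9$-dimensional Euclidean space $E$, and suppose there is an $8$-dimensional subspace $F\subset E$ such that $\Lambda\cap F$ is similar to the root lattice $\mathsf E_8$ and $\min(\Lambda\cap F)=\min\Lambda$. Then there is no lattice $L\subset E$ with $\min L=\min\Lambda$ and $\Lambda\subsetneq L$.
   Context: For a lattice $\Lambda$, $\min\Lambda=\min_{x\in\Lambda\setminus\{0\}}x\cdot x$; its minimal vectors are those attaining this minimum; $\Lambda$ is well-rounded if its minimal vectors span the ambient space. $\mathsf E_8=\mathsf D_8\cup(\tfrac12(1,\dots,1)+\mathsf D_8)$ where $\mathsf D_8=\{x\in\mathbb Z^8:\sum x_i \text{ even}\}$. *)

theory Defs
  imports "HOL-Analysis.Analysis"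
begin

definition zspan :: "'a::real_vector set \<Rightarrow> 'a set" where
  "zspan B = {\<Sum>b\<in>B. of_int (c b) *\<^sub>R b | c. True}"

definition lattice_of_rank :: "'a::real_vector set \<Rightarrow> nat \<Rightarrow> bool" where
  "lattice_of_rank L r \<longleftrightarrow> (\<exists>B. finite B \<and> independent B \<and> card B = r \<and> L = zspan B)"

definition lattice :: "'a::real_vector set \<Rightarrow> bool" where
  "lattice L \<longleftrightarrow> (\<exists>r. lattice_of_rank L r)"

definition lattice_min :: "'a::real_inner set \<Rightarrow> real" where
  "lattice_min L = Inf {x \<bullet> x | x. x \<in> L \<and> x \<noteq> 0}"

definition min_vectors :: "'a::real_inner set \<Rightarrow> 'a set" where
  "min_vectors L = {x \<in> L. x \<noteq> 0 \<and> x \<bullet> x = lattice_min L}"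

definition well_rounded :: "'a::euclidean_space set \<Rightarrow> bool" where
  "well_rounded L \<longleftrightarrow> span (min_vectors L) = UNIV"

definition D8 :: "(real ^ 8) set" where
  "D8 = {x. (\<forall>i. x $ i \<in> \<int>) \<and> (\<exists>k::int. (\<Sum>i\<in>UNIV. x $ i) = 2 * of_int k)}"

definition E8 :: "(real ^ 8) set" where
  "E8 = D8 \<union> {(\<chi> i. 1/2) + x | x. x \<in> D8}"

definition similar_to_E8 :: "'a::euclidean_space set \<Rightarrow> bool" where
  "similar_to_E8 S \<longleftrightarrow> (\<exists>f :: real ^ 8 \<Rightarrow> 'a. linear f \<and>
      (\<exists>c>0. \<forall>x. norm (f x) = c * norm x) \<and> f ` E8 = S)"

end

theory Submission
  imports Defs
begin

text \<open>
  Every point of \<open>\<real>\<^sup>8\<close> lies within squared distance \<open>1 = (min E\<^sub>8)/2\<close> of a point of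
  \<open>D\<^sub>8\<close> or of \<open>(1/2,\<dots>,1/2) + D\<^sub>8\<close>. Let \<open>m = min \<Lambda>\<close>, \<open>V = span (\<Lambda> \<inter> F)\<close>, and let
  \<open>u\<close> be a minimal vector of \<open>\<Lambda>\<close> outside \<open>F\<close>, which exists by well-roundedness; then
  \<open>V\<close> and \<open>u\<close> span the space. Any \<open>v \<in> L\<close> can be shifted by an integer multiple of \<open>u\<close>
  so that its component orthogonal to \<open>V\<close> has squared length at most \<open>m/4\<close>, and then by a
  point of \<open>\<Lambda> \<inter> F\<close> so that its component in \<open>V\<close> has squared length at most \<open>m/2\<close>. The
  resulting vector of \<open>L\<close> is shorter than \<open>m\<close>, hence zero, so \<open>v \<in> \<Lambda>\<close>.
\<close>

lemma zspan_add: "a \<in> zspan B \<Longrightarrow> b \<in> zspan B \<Longrightarrow> a + b \<in> zspan B"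
proof -
  assume "a \<in> zspan B" "b \<in> zspan B"
  then obtain c d where a: "a = (\<Sum>x\<in>B. of_int (c x) *\<^sub>R x)" and b: "b = (\<Sum>x\<in>B. of_int (d x) *\<^sub>R x)"
    unfolding zspan_def by auto
  have "a + b = (\<Sum>x\<in>B. of_int (c x + d x) *\<^sub>R x)"
    by (simp add: a b sum.distrib[symmetric] scaleR_add_left)
  thus ?thesis unfolding zspan_def mem_Collect_eq by (intro exI[of _ "\<lambda>x. c x + d x"]) simp
qed

lemma zspan_diff: "a \<in> zspan B \<Longrightarrow> b \<in> zspan B \<Longrightarrow> a - b \<in> zspan B"
proof -
  assume "a \<in> zspan B" "b \<in> zspan B"
  then obtain c d where a: "a = (\<Sum>x\<in>B. of_int (c x) *\<^sub>R x)" and b: "b = (\<Sum>x\<in>B. of_int (d x) *\<^sub>R x)"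
    unfolding zspan_def by auto
  have "a - b = (\<Sum>x\<in>B. of_int (c x - d x) *\<^sub>R x)"
    by (simp add: a b sum_subtractf[symmetric] scaleR_diff_left)
  thus ?thesis unfolding zspan_def mem_Collect_eq by (intro exI[of _ "\<lambda>x. c x - d x"]) simp
qed

lemma zspan_of_int_scaleR: "a \<in> zspan B \<Longrightarrow> of_int k *\<^sub>R a \<in> zspan B"
proof -
  assume "a \<in> zspan B"
  then obtain c where a: "a = (\<Sum>x\<in>B. of_int (c x) *\<^sub>R x)"
    unfolding zspan_def by auto
  have "of_int k *\<^sub>R a = (\<Sum>x\<in>B. of_int (k * c x) *\<^sub>R x)"
    by (simp add: a scaleR_sum_right)
  thus ?thesis unfolding zspan_def mem_Collect_eq by (intro exI[of _ "\<lambda>x. k * c x"]) simp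
qed

lemma lattice_min_le:
  assumes "x \<in> L" "x \<noteq> 0"
  shows "lattice_min L \<le> x \<bullet> x"
  unfolding lattice_min_def
  by (rule cInf_lower) (use assms in \<open>auto intro!: bdd_belowI[where m=0]\<close>)

lemma int_abs_le_power2: "\<bar>a::int\<bar> \<le> a\<^sup>2"
proof (cases "a = 0")
  case False
  hence "\<bar>a\<bar> * 1 \<le> \<bar>a\<bar> * \<bar>a\<bar>" by (intro mult_left_mono) auto
  thus ?thesis by (simp add: power2_eq_square)
qed simp

lemma D8_inner_self_ge_2:
  assumes "x \<in> D8" "x \<noteq> 0"
  shows "2 \<le> x \<bullet> x"
proof -
  define a where "a i = \<lfloor>x$i\<rfloor>" for i
  have xa: "x$i = of_int (a i)" for i
    using assms(1) unfolding D8_def a_def by (auto elim!: Ints_cases)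
  obtain q where "(\<Sum>i\<in>UNIV. x $ i) = 2 * of_int q" using assms(1) unfolding D8_def by auto
  hence "of_int (\<Sum>i\<in>UNIV. a i) = (of_int (2 * q) :: real)" by (simp add: xa)
  hence sum_even: "(\<Sum>i\<in>UNIV. a i) = 2 * q" by (simp only: of_int_eq_iff)
  obtain i0 where "x $ i0 \<noteq> 0" using assms(2) by (metis vec_eq_iff zero_index)
  hence "\<bar>a i0\<bar> > 0" by (simp add: xa)
  moreover have "\<bar>a i0\<bar> \<le> (\<Sum>i\<in>UNIV. \<bar>a i\<bar>)" by (rule member_le_sum) auto
  \<comment> \<open>\<open>\<Sum>\<bar>a\<^sub>i\<bar>\<close> has the parity of \<open>\<Sum>a\<^sub>i\<close>.\<close>
  moreover have "(\<Sum>i\<in>UNIV. \<bar>a i\<bar>) = (\<Sum>i\<in>UNIV. a i) + 2 * (\<Sum>i\<in>UNIV. max (- a i) 0)"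
    by (simp add: sum.distrib[symmetric] sum_distrib_left) (intro sum.cong, auto)
  ultimately have "2 \<le> (\<Sum>i\<in>UNIV. \<bar>a i\<bar>)" unfolding sum_even by presburger
  also have "\<dots> \<le> (\<Sum>i\<in>UNIV. (a i)\<^sup>2)" by (intro sum_mono int_abs_le_power2)
  finally have "(2::real) \<le> of_int (\<Sum>i\<in>UNIV. (a i)\<^sup>2)" by linarith
  also have "\<dots> = x \<bullet> x" by (simp add: inner_vec_def xa power2_eq_square)
  finally show ?thesis .
qed

lemma D8_coset_inner_self_ge_2:
  assumes "d \<in> D8"
  shows "2 \<le> ((\<chi> i. 1/2) + d) \<bullet> ((\<chi> i. 1/2) + d)"
proof -
  have "1/4 \<le> (1/2 + d$i)\<^sup>2" for i
  proof -
    obtain b where b: "d$i = of_int b" using assms unfolding D8_def by (auto elim!: Ints_cases)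
    have "\<bar>1/2\<bar> \<le> \<bar>1/2 + of_int b :: real\<bar>" by (cases "b \<ge> 0") auto
    thus ?thesis unfolding b abs_le_square_iff by (simp add: power2_eq_square)
  qed
  hence "(\<Sum>i\<in>(UNIV::8 set). 1/4) \<le> (\<Sum>i\<in>UNIV. (1/2 + d$i)\<^sup>2)" by (intro sum_mono)
  thus ?thesis by (simp add: inner_vec_def power2_eq_square)
qed

lemma E8_inner_self_ge_2:
  assumes "x \<in> E8" "x \<noteq> 0"
  shows "2 \<le> x \<bullet> x"
  using assms D8_inner_self_ge_2 D8_coset_inner_self_ge_2 unfolding E8_def by blast

lemma half_ones_in_E8: "(\<chi> i. 1/2) \<in> E8"
proof -
  have "0 \<in> D8" unfolding D8_def by auto
  thus ?thesis unfolding E8_def by force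
qed

lemma span_E8: "span E8 = UNIV"
proof -
  have "axis i 1 \<in> span E8" for i :: 8
  proof -
    have "(\<Sum>k\<in>UNIV. (2 *\<^sub>R axis i (1::real)) $ k) = 2 * of_int 1"
      by (simp add: axis_def sum_distrib_left[symmetric])
    hence "2 *\<^sub>R axis i (1::real) \<in> D8" unfolding D8_def by (auto simp: axis_def)
    hence "2 *\<^sub>R axis i (1::real) \<in> span E8" unfolding E8_def by (intro span_base) auto
    hence "(1/2) *\<^sub>R (2 *\<^sub>R axis i (1::real)) \<in> span E8" by (rule span_mul)
    thus ?thesis by simp
  qed
  hence "span Basis \<subseteq> span E8" by (intro span_minimal) (auto simp: Basis_vec_def)
  thus ?thesis by auto
qed

definition round_error :: "real \<Rightarrow> real" where
  "round_error x = \<bar>x - of_int (round x)\<bar>"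

lemma round_error_le_half: "round_error x \<le> 1/2"
  using of_int_round_abs_le[of x] by (simp add: round_error_def abs_minus_commute)

text \<open>
  Round every coordinate; if the parity of the coordinate sum is wrong, round coordinate
  \<open>j\<close> the other way, which turns its contribution \<open>\<delta>\<^sup>2\<close> into \<open>(1 - \<delta>)\<^sup>2\<close>.
\<close>
lemma D8_dist_le:
  fixes z :: "real^8"
  shows "\<exists>c\<in>D8. (z - c) \<bullet> (z - c)
           \<le> (\<Sum>i\<in>UNIV. (round_error (z$i))\<^sup>2) + 1 - 2 * round_error (z$j)"
proof -
  define g where "g i = round (z$i)" for i
  define r where "r i = z$i - of_int (g i)" for i
  define a :: int where "a = (if odd (\<Sum>i\<in>UNIV. g i) then (if r j \<ge> 0 then 1 else -1) else 0)"
  define G where "G i = g i + (if i = j then a else 0)" for i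
  have "(\<Sum>i\<in>UNIV. G i) = (\<Sum>i\<in>UNIV. g i) + a" by (simp add: G_def sum.distrib)
  hence "even (\<Sum>i\<in>UNIV. G i)" unfolding a_def by auto
  then obtain q where q: "(\<Sum>i\<in>UNIV. G i) = 2 * q" by (auto elim: evenE)
  define c :: "real^8" where "c = (\<chi> i. of_int (G i))"
  have "(\<Sum>i\<in>UNIV. c $ i) = 2 * of_int q"
    unfolding c_def by (simp flip: of_int_sum add: q)
  hence "c \<in> D8" unfolding D8_def by (auto simp: c_def)
  moreover have "(z - c) \<bullet> (z - c) \<le> (\<Sum>i\<in>UNIV. (round_error (z$i))\<^sup>2) + 1 - 2 * round_error (z$j)"
  proof -
    have "(z - c) \<bullet> (z - c) = (\<Sum>i\<in>UNIV. (r i - of_int (if i = j then a else 0))\<^sup>2)"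
      by (simp add: inner_vec_def c_def G_def r_def power2_eq_square algebra_simps)
    also have "\<dots> \<le> (\<Sum>i\<in>UNIV. (round_error (z$i))\<^sup>2 + (if i = j then 1 - 2 * round_error (z$j) else 0))"
      using round_error_le_half[of "z$j"]
      by (intro sum_mono) (auto simp: a_def round_error_def r_def g_def power2_eq_square algebra_simps abs_if)
    finally show ?thesis by (simp add: sum.distrib)
  qed
  ultimately show ?thesis by blast
qed

text \<open>
  The nearest half-integer to \<open>z\<^sub>i\<close> is at distance \<open>1/2 - \<delta>\<^sub>i\<close>; a parity correction at
  coordinate \<open>k\<close> turns \<open>(1/2 - \<delta>)\<^sup>2\<close> into \<open>(1/2 + \<delta>)\<^sup>2\<close>.
\<close>
lemma D8_coset_dist_le:
  fixes z :: "real^8"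
  shows "\<exists>d\<in>D8. (z - ((\<chi> i. 1/2) + d)) \<bullet> (z - ((\<chi> i. 1/2) + d))
           \<le> (\<Sum>i\<in>UNIV. (1/2 - round_error (z$i))\<^sup>2) + 2 * round_error (z$k)"
proof -
  define g where "g i = round (z$i)" for i
  define r where "r i = z$i - of_int (g i)" for i
  define t :: "8 \<Rightarrow> int" where "t i = (if r i \<ge> 0 then 0 else -1)" for i
  define b :: int where "b = (if odd (\<Sum>i\<in>UNIV. g i + t i) then (if r k \<ge> 0 then 1 else -1) else 0)"
  define G where "G i = g i + t i - (if i = k then b else 0)" for i
  have "(\<Sum>i\<in>UNIV. G i) = (\<Sum>i\<in>UNIV. g i + t i) - b" by (simp add: G_def sum_subtractf)
  hence "even (\<Sum>i\<in>UNIV. G i)" unfolding b_def by auto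
  then obtain q where q: "(\<Sum>i\<in>UNIV. G i) = 2 * q" by (auto elim: evenE)
  define d :: "real^8" where "d = (\<chi> i. of_int (G i))"
  have "(\<Sum>i\<in>UNIV. d $ i) = 2 * of_int q"
    unfolding d_def by (simp flip: of_int_sum add: q)
  hence "d \<in> D8" unfolding D8_def by (auto simp: d_def)
  moreover have "(z - ((\<chi> i. 1/2) + d)) \<bullet> (z - ((\<chi> i. 1/2) + d))
                   \<le> (\<Sum>i\<in>UNIV. (1/2 - round_error (z$i))\<^sup>2) + 2 * round_error (z$k)"
  proof -
    have "(z - ((\<chi> i. 1/2) + d)) \<bullet> (z - ((\<chi> i. 1/2) + d))
            = (\<Sum>i\<in>UNIV. (r i - of_int (t i) - 1/2 + of_int (if i = k then b else 0))\<^sup>2)"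
      by (simp add: inner_vec_def d_def G_def r_def power2_eq_square algebra_simps)
    also have "\<dots> \<le> (\<Sum>i\<in>UNIV. (1/2 - round_error (z$i))\<^sup>2 + (if i = k then 2 * round_error (z$k) else 0))"
      using round_error_le_half[of "z$k"]
      by (intro sum_mono) (auto simp: b_def t_def round_error_def r_def g_def power2_eq_square algebra_simps abs_if)
    finally show ?thesis by (simp add: sum.distrib)
  qed
  ultimately show ?thesis by blast
qed

text \<open>
  Weighting the negations of the two alternatives by \<open>1 - m - M\<close> and \<open>m + M\<close> and adding
  eliminates \<open>D\<close> and contradicts \<open>(M - m)(1 - 2(M - m)) \<ge> 0\<close>.
\<close>
lemma min_max_alternative:
  fixes m M S D :: real
  assumes "0 \<le> m" "m \<le> M" "M \<le> 1/2" "S \<le> (m + M) * D - 8 * m * M"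
  shows "S \<le> 2 * M \<or> S \<le> D - 1 - 2 * m"
proof (rule ccontr)
  assume "\<not> ?thesis"
  hence A: "(m + M) * D > 2 * M + 8 * m * M" and B: "(1 - m - M) * D < 1 + 2 * m - 8 * m * M"
    using assms(4) by (auto simp: algebra_simps)
  show False
  proof (cases "m + M = 1")
    case True
    hence m: "m = 1/2" and M: "M = 1/2" using assms by auto
    have "1 + 2 * m - 8 * m * M = 0" unfolding m M by simp
    moreover have "1 - m - M = 0" using True by simp
    ultimately show False using B by simp
  next
    case False
    hence pos: "1 - m - M > 0" using assms by auto
    have "(1 - m - M) * ((m + M) * D) > (1 - m - M) * (2 * M + 8 * m * M)"
      using A pos by (simp add: mult_strict_left_mono)
    moreover have "(m + M) * ((1 - m - M) * D) \<le> (m + M) * (1 + 2 * m - 8 * m * M)"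
      using B assms by (intro mult_left_mono) auto
    moreover have "(M - m) * (1 - 2 * (M - m)) \<ge> 0" using assms by (intro mult_nonneg_nonneg) auto
    ultimately show False by (simp add: algebra_simps)
  qed
qed

lemma round_error_alternative:
  fixes \<delta> :: "8 \<Rightarrow> real"
  assumes "\<And>i. 0 \<le> \<delta> i" "\<And>i. \<delta> i \<le> 1/2" "\<And>i. \<delta> i \<le> \<delta> j" "\<And>i. \<delta> k \<le> \<delta> i"
  shows "(\<Sum>i\<in>UNIV. (\<delta> i)\<^sup>2) + 1 - 2 * \<delta> j \<le> 1 \<or> (\<Sum>i\<in>UNIV. (1/2 - \<delta> i)\<^sup>2) + 2 * \<delta> k \<le> 1"
proof -
  define S where "S = (\<Sum>i\<in>UNIV. (\<delta> i)\<^sup>2)"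
  define D where "D = (\<Sum>i\<in>UNIV. \<delta> i)"
  have "0 \<le> (\<Sum>i\<in>UNIV. (\<delta> i - \<delta> k) * (\<delta> j - \<delta> i))"
    using assms by (intro sum_nonneg mult_nonneg_nonneg) auto
  also have "\<dots> = (\<Sum>i\<in>UNIV. (\<delta> k + \<delta> j) * \<delta> i - (\<delta> i)\<^sup>2 - \<delta> k * \<delta> j)"
    by (intro sum.cong) (auto simp: algebra_simps power2_eq_square)
  also have "\<dots> = (\<delta> k + \<delta> j) * D - S - 8 * (\<delta> k * \<delta> j)"
    by (simp add: sum_subtractf sum_distrib_left S_def D_def)
  finally have "S \<le> (\<delta> k + \<delta> j) * D - 8 * \<delta> k * \<delta> j" by simp
  hence "S \<le> 2 * \<delta> j \<or> S \<le> D - 1 - 2 * \<delta> k"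
    by (rule min_max_alternative[OF assms(1)[of k] assms(4)[of j] assms(2)[of j]])
  moreover have "(\<Sum>i\<in>UNIV. (1/2 - \<delta> i)\<^sup>2) = (\<Sum>i\<in>UNIV. 1/4 - \<delta> i + (\<delta> i)\<^sup>2)"
    by (intro sum.cong) (auto simp: algebra_simps power2_eq_square)
  hence "(\<Sum>i\<in>UNIV. (1/2 - \<delta> i)\<^sup>2) = 2 - D + S"
    by (simp add: sum.distrib sum_subtractf S_def D_def)
  ultimately show ?thesis unfolding S_def by auto
qed

lemma E8_covering:
  fixes z :: "real^8"
  shows "\<exists>e\<in>E8. (z - e) \<bullet> (z - e) \<le> 1"
proof -
  define \<delta> where "\<delta> i = round_error (z$i)" for i
  have "Max (range \<delta>) \<in> range \<delta>" "Min (range \<delta>) \<in> range \<delta>" by (intro Max_in Min_in; simp)+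
  then obtain j k where "\<delta> j = Max (range \<delta>)" "\<delta> k = Min (range \<delta>)" by (metis rangeE)
  hence j: "\<And>i. \<delta> i \<le> \<delta> j" and k: "\<And>i. \<delta> k \<le> \<delta> i" by simp_all
  have "\<And>i. 0 \<le> \<delta> i" "\<And>i. \<delta> i \<le> 1/2"
    by (simp_all only: \<delta>_def round_error_le_half) (simp add: round_error_def)
  from round_error_alternative[OF this j k] show ?thesis
  proof
    assume "(\<Sum>i\<in>UNIV. (\<delta> i)\<^sup>2) + 1 - 2 * \<delta> j \<le> 1"
    moreover obtain c where "c \<in> D8" "(z - c) \<bullet> (z - c) \<le> (\<Sum>i\<in>UNIV. (\<delta> i)\<^sup>2) + 1 - 2 * \<delta> j"
      using D8_dist_le[of z j] unfolding \<delta>_def by blast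
    ultimately show ?thesis unfolding E8_def by (intro bexI[of _ c]) auto
  next
    assume "(\<Sum>i\<in>UNIV. (1/2 - \<delta> i)\<^sup>2) + 2 * \<delta> k \<le> 1"
    moreover obtain d where "d \<in> D8"
      "(z - ((\<chi> i. 1/2) + d)) \<bullet> (z - ((\<chi> i. 1/2) + d)) \<le> (\<Sum>i\<in>UNIV. (1/2 - \<delta> i)\<^sup>2) + 2 * \<delta> k"
      using D8_coset_dist_le[of z k] unfolding \<delta>_def by blast
    ultimately show ?thesis unfolding E8_def by (intro bexI[of _ "(\<chi> i. 1/2) + d"]) auto
  qed
qed

lemma lattice_min_similar_image_E8:
  fixes f :: "real^8 \<Rightarrow> 'a::real_inner"
  assumes "\<And>x. norm (f x) = c * norm x" "c > 0"
  shows "lattice_min (f ` E8) = 2 * c\<^sup>2"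
proof -
  have ff: "f x \<bullet> f x = c\<^sup>2 * (x \<bullet> x)" for x
    using assms(1)[of x] by (simp add: power2_norm_eq_inner[symmetric] power_mult_distrib)
  define h :: "real^8" where "h = (\<chi> i. 1/2)"
  have hh: "h \<bullet> h = 2" by (simp add: h_def inner_vec_def)
  hence "f h \<noteq> 0" using ff assms(2) by (metis inner_zero_left mult_eq_0_iff power_not_zero zero_neq_numeral less_irrefl)
  have hE: "h \<in> E8" unfolding h_def by (rule half_ones_in_E8)
  show ?thesis
  proof (rule antisym)
    show "lattice_min (f ` E8) \<le> 2 * c\<^sup>2"
      using lattice_min_le[of "f h" "f ` E8"] hE \<open>f h \<noteq> 0\<close> ff hh by (simp add: mult.commute)
    show "2 * c\<^sup>2 \<le> lattice_min (f ` E8)"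
      unfolding lattice_min_def
    proof (rule cInf_greatest)
      show "{x \<bullet> x |x. x \<in> f ` E8 \<and> x \<noteq> 0} \<noteq> {}" using hE \<open>f h \<noteq> 0\<close> by blast
    next
      fix y assume "y \<in> {x \<bullet> x |x. x \<in> f ` E8 \<and> x \<noteq> 0}"
      then obtain e where e: "e \<in> E8" "f e \<noteq> 0" "y = c\<^sup>2 * (e \<bullet> e)" using ff by auto
      hence "e \<noteq> 0" using assms(1)[of 0] by auto
      hence "2 \<le> e \<bullet> e" using E8_inner_self_ge_2 e(1) by blast
      thus "2 * c\<^sup>2 \<le> y" using e(3) mult_right_mono[of 2 "e \<bullet> e" "c\<^sup>2"] by (simp add: mult.commute)
    qed
  qed
qed

lemma dim_similar_image_E8:
  fixes f :: "real^8 \<Rightarrow> 'a::euclidean_space"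
  assumes "linear f" "\<And>x. norm (f x) = c * norm x" "c > 0"
  shows "dim (f ` E8) = 8"
proof -
  have "inj f"
    using assms by (metis linear_injective_0 mult_eq_0_iff norm_eq_zero less_irrefl)
  hence "dim (f ` E8) = dim E8"
    using dim_image_eq[OF assms(1)] by (metis inj_on_subset subset_UNIV)
  also have "\<dots> = 8" using dim_span[of E8] by (simp add: span_E8)
  finally show ?thesis .
qed

lemma similar_image_E8_covering:
  fixes f :: "real^8 \<Rightarrow> 'a::real_inner"
  assumes "linear f" "\<And>x. norm (f x) = c * norm x"
    and "y \<in> span (f ` E8)"
  shows "\<exists>e\<in>f ` E8. (y - e) \<bullet> (y - e) \<le> c\<^sup>2"
proof -
  have "y \<in> f ` span E8" using assms(3) by (simp add: span_linear_image[OF assms(1)])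
  then obtain z where z: "y = f z" by auto
  obtain e where e: "e \<in> E8" "(z - e) \<bullet> (z - e) \<le> 1" using E8_covering by blast
  have "(y - f e) \<bullet> (y - f e) = c\<^sup>2 * ((z - e) \<bullet> (z - e))"
    using assms(2)[of "z - e"] z linear_diff[OF assms(1)]
    by (simp add: power2_norm_eq_inner[symmetric] power_mult_distrib)
  also have "\<dots> \<le> c\<^sup>2" using e(2) by (simp add: mult_left_le)
  finally show ?thesis using e(1) by blast
qed

lemma well_rounded_min_vector_notin_subspace:
  assumes "well_rounded L" "subspace F" "F \<noteq> UNIV"
  obtains u where "u \<in> min_vectors L" "u \<notin> F"
proof -
  have "\<not> min_vectors L \<subseteq> F"
  proof
    assume "min_vectors L \<subseteq> F"
    hence "span (min_vectors L) \<subseteq> F" using span_minimal assms(2) by blast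
    thus False using assms(1,3) unfolding well_rounded_def by auto
  qed
  thus ?thesis using that by blast
qed

lemma span_insert_hyperplane:
  fixes V :: "'a::euclidean_space set"
  assumes "dim V + 1 = DIM('a)" "u \<notin> span V"
  shows "span (insert u V) = UNIV"
  using assms by (simp add: dim_insert dim_eq_full[symmetric])

text \<open>
  The vector \<open>z\<close> is a multiple, with coefficient at most \<open>1/2\<close> in absolute value, of the
  component of \<open>u\<close> orthogonal to \<open>V\<close>.
\<close>
lemma integer_shift_near_subspace:
  fixes u v :: "'a::euclidean_space"
  assumes "subspace V" "span (insert u V) = UNIV"
  obtains k :: int and y z where "y \<in> V" "v - of_int k *\<^sub>R u = y + z"
    and "\<And>w. w \<in> V \<Longrightarrow> orthogonal z w" and "z \<bullet> z \<le> u \<bullet> u / 4"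
proof -
  have spanV: "span V = V" using assms(1) by (simp add: span_eq_iff)
  obtain t where vt: "v - t *\<^sub>R u \<in> V" using assms(2) span_breakdown_eq spanV by blast
  obtain yu wu where yu: "yu \<in> V" and wu: "\<And>w. w \<in> V \<Longrightarrow> orthogonal wu w" and u: "u = yu + wu"
    using orthogonal_subspace_decomp_exists[of V u] spanV by metis
  define k where "k = round t"
  define s where "s = t - of_int k"
  have "\<bar>s\<bar> \<le> 1/2" using of_int_round_abs_le[of t] by (simp add: s_def k_def abs_minus_commute)
  hence s2: "s\<^sup>2 \<le> 1/4" using abs_le_square_iff[of s "1/2"] by (simp add: power2_eq_square)
  have "u \<bullet> u = yu \<bullet> yu + wu \<bullet> wu"
    using norm_add_Pythagorean[of yu wu] wu[OF yu] u
    by (simp add: orthogonal_commute power2_norm_eq_inner)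
  hence "wu \<bullet> wu \<le> u \<bullet> u" by simp
  hence "s\<^sup>2 * (wu \<bullet> wu) \<le> 1/4 * (u \<bullet> u)" using s2 by (intro mult_mono) auto
  hence "(s *\<^sub>R wu) \<bullet> (s *\<^sub>R wu) \<le> u \<bullet> u / 4" by (simp add: power2_eq_square mult.assoc)
  moreover have "s *\<^sub>R yu + (v - t *\<^sub>R u) \<in> V"
    using yu vt assms(1) by (simp add: subspace_add subspace_mul)
  moreover have "v - of_int k *\<^sub>R u = (s *\<^sub>R yu + (v - t *\<^sub>R u)) + s *\<^sub>R wu"
    by (simp add: u s_def algebra_simps)
  moreover have "orthogonal (s *\<^sub>R wu) w" if "w \<in> V" for w
    using wu[OF that] by (simp add: orthogonal_clauses)
  ultimately show ?thesis using that by blast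
qed

lemma zspan_superlattice_subset:
  fixes u :: "'a::euclidean_space"
  assumes "zspan B \<subseteq> zspan C"
    and short: "\<And>x. x \<in> zspan C \<Longrightarrow> x \<noteq> 0 \<Longrightarrow> m \<le> x \<bullet> x"
    and "S \<subseteq> zspan B" "span (insert u (span S)) = UNIV" "u \<in> zspan B" "u \<bullet> u \<le> m"
    and cover: "\<And>y. y \<in> span S \<Longrightarrow> \<exists>p\<in>S. (y - p) \<bullet> (y - p) \<le> r"
    and "r < 3/4 * m"
  shows "zspan C \<subseteq> zspan B"
proof
  fix v assume v: "v \<in> zspan C"
  obtain k :: int and y z where y: "y \<in> span S" and vkuyz: "v - of_int k *\<^sub>R u = y + z"
    and z: "\<And>w. w \<in> span S \<Longrightarrow> orthogonal z w" and zz: "z \<bullet> z \<le> u \<bullet> u / 4"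
    using integer_shift_near_subspace[OF subspace_span assms(4)] by metis
  obtain p where p: "p \<in> S" and yp: "(y - p) \<bullet> (y - p) \<le> r"
    using cover[OF y] by blast
  have pB: "p \<in> zspan B" using p assms(3) by blast
  define x where "x = v - of_int k *\<^sub>R u - p"
  have "x \<in> zspan C"
    unfolding x_def using v pB assms(1,5) by (meson subsetD zspan_diff zspan_of_int_scaleR)
  have "x \<bullet> x = (y - p) \<bullet> (y - p) + z \<bullet> z"
  proof -
    have "orthogonal (y - p) z"
      using z[of "y - p"] y p by (simp add: span_diff span_base orthogonal_commute)
    hence "norm ((y - p) + z) ^ 2 = norm (y - p) ^ 2 + norm z ^ 2" by (rule norm_add_Pythagorean)
    moreover have "x = (y - p) + z" unfolding x_def vkuyz by simp
    ultimately show ?thesis by (simp add: power2_norm_eq_inner)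
  qed
  also have "\<dots> < m" using yp zz assms(6,8) by linarith
  finally have "x = 0" using short[OF \<open>x \<in> zspan C\<close>] by force
  hence "v = p + of_int k *\<^sub>R u" unfolding x_def by (simp add: algebra_simps)
  thus "v \<in> zspan B" using pB assms(5) by (simp add: zspan_add zspan_of_int_scaleR)
qed

theorem lemma3p3:
  fixes \<Lambda> F :: "'a::euclidean_space set"
  assumes "DIM('a) = 9"
    and "lattice_of_rank \<Lambda> 9"
    and "well_rounded \<Lambda>"
    and "subspace F" and "dim F = 8"
    and "similar_to_E8 (\<Lambda> \<inter> F)"
    and "lattice_min (\<Lambda> \<inter> F) = lattice_min \<Lambda>"
  shows "\<not> (\<exists>L. lattice L \<and> lattice_min L = lattice_min \<Lambda> \<and> \<Lambda> \<subset> L)"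
proof
  assume "\<exists>L. lattice L \<and> lattice_min L = lattice_min \<Lambda> \<and> \<Lambda> \<subset> L"
  then obtain L where "lattice L" and Lmin: "lattice_min L = lattice_min \<Lambda>" and sub: "\<Lambda> \<subset> L" by blast
  obtain B where \<Lambda>: "\<Lambda> = zspan B" using assms(2) unfolding lattice_of_rank_def by blast
  obtain C where L: "L = zspan C" using \<open>lattice L\<close> unfolding lattice_def lattice_of_rank_def by blast
  obtain f :: "real^8 \<Rightarrow> 'a" and c where f: "linear f" "\<And>x. norm (f x) = c * norm x" "c > 0"
    and fE8: "f ` E8 = \<Lambda> \<inter> F"
    using assms(6) unfolding similar_to_E8_def by blast
  have m: "lattice_min \<Lambda> = 2 * c\<^sup>2"
    using lattice_min_similar_image_E8[OF f(2,3)] fE8 assms(7) by simp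
  obtain u where u: "u \<in> min_vectors \<Lambda>" "u \<notin> F"
    using well_rounded_min_vector_notin_subspace[OF assms(3,4)] assms(1,5) dim_UNIV by force
  have "u \<notin> span (span (\<Lambda> \<inter> F))" using u(2) assms(4) by (metis span_minimal span_span inf_le2 subsetD)
  hence hyperplane: "span (insert u (span (\<Lambda> \<inter> F))) = UNIV"
    using dim_similar_image_E8[OF f] fE8 assms(1) by (intro span_insert_hyperplane) simp_all
  have "zspan C \<subseteq> zspan B"
  proof (rule zspan_superlattice_subset[OF _ _ _ hyperplane, where m = "lattice_min \<Lambda>" and r = "c\<^sup>2"])
    show "zspan B \<subseteq> zspan C" "\<Lambda> \<inter> F \<subseteq> zspan B" using sub \<Lambda> L by blast+
    show "lattice_min \<Lambda> \<le> x \<bullet> x" if "x \<in> zspan C" "x \<noteq> 0" for x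
      using lattice_min_le[of x L] that Lmin L by simp
    show "u \<in> zspan B" "u \<bullet> u \<le> lattice_min \<Lambda>" using u(1) \<Lambda> unfolding min_vectors_def by auto
    show "\<exists>p\<in>\<Lambda> \<inter> F. (y - p) \<bullet> (y - p) \<le> c\<^sup>2" if "y \<in> span (\<Lambda> \<inter> F)" for y
      using similar_image_E8_covering[OF f(1,2)] that unfolding fE8 by blast
    show "c\<^sup>2 < 3/4 * lattice_min \<Lambda>" using m f(3) by simp
  qed
  thus False using sub \<Lambda> L by blast
qed

end
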